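(* Let $T\ge1$, $n\ge1$ with $nT\ge2$, $\mu\in\mathbb{R}$, $\sigma>0$, $z^*\in\mathbb{R}$, $\tau\in\{1,\dots,T\}$. Under $\mathbf{H_0}$ the real numbers $X_{t,k}$ ($t\le T$, $k\le n$) are i.i.d. $\mathcal{N}(\mu,\sigma^2)$; under $\mathbf{H_1^\tau}$ they are generated the same way and then $X_{\tau,J}$ is replaced by $z^*$, with $J$ uniform on $\{1,\dots,n\}$ independent of the data. Let $\hat\mu_T=\frac{1}{nT}\sum_{t=1}^T\sum_{k=1}^nX_{t,k}$, $W=\hat\mu_T-\mu$, and \[ L_{\mathrm{FO}}=-\frac12\log\Big(\frac{nT-1}{nT}\Big)-\frac{nT}{2(nT-1)\sigma^2}W^2+\frac{nT(z^*-\mu)}{(nT-1)\sigma^2}W-\frac{(z^*-\mu)^2}{2(nT-1)\sigma^2}. \] Let $\beta_{\mathrm{FO}}(\gamma)=\mathbb{P}_{\mathbf{H_1^\tau}}(L_{\mathrm{FO}}<\gamma)$, $\gamma^{(T)}_{\max}=\frac12\big[\frac{(z^*-\mu)^2}{\sigma^2}-\log\big(\frac{nT-1}{nT}\big)\big]$, $m^*=\frac{(z^*-\mu)^2}{\sigma^2}$, $a_T=\sqrt{m^*nT}$, $b_T(\gamma)=\sqrt{(nT-1)\big(m^*-\log(1-\frac1{nT})-2\gamma\big)}$. Then for every $\gamma\le\gamma^{(T)}_{\max}$, \[ \beta_{\mathrm{FO}}(\gamma)=\Phi\Big(a_T\sqrt{\tfrac{nT-1}{nT}}-b_T(\gamma)\sqrt{\tfrac{nT}{nT-1}}\Big)+\Phi\Big(-a_T\sqrt{\tfrac{nT-1}{nT}}-b_T(\gamma)\sqrt{\tfrac{nT}{nT-1}}\Big),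 \] where $\Phi$ is the standard normal cumulative distribution function.
   Context: $L_{\mathrm{FO}}$ is the log likelihood ratio statistic of a membership test that only observes the final cumulative mean; $\beta_{\mathrm{FO}}(\gamma)$ is its Type II error at threshold $\gamma$. *)

theory Defs
  imports "HOL-Probability.Probability"
begin

definition Phi :: "real \<Rightarrow> real" where
  "Phi x = cdf (density lborel std_normal_density) x"

definition idx :: "nat \<Rightarrow> nat \<Rightarrow> (nat \<times> nat) set" where
  "idx T n = {1..T} \<times> {1..n}"

definition data_measure :: "nat \<Rightarrow> nat \<Rightarrow> real \<Rightarrow> real \<Rightarrow> ((nat \<times> nat) \<Rightarrow> real) measure" where
  "data_measure T n \<mu> \<sigma> = PiM (idx T n) (\<lambda>_. density lborel (normal_density \<mu> \<sigma>))"

text \<open>Under H1^tau: sample J uniform on 1..n independently of the data X, and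
  the observed data is X with entry (tau, J) replaced by z*.\<close>
definition H1_measure :: "nat \<Rightarrow> nat \<Rightarrow> real \<Rightarrow> real \<Rightarrow> (nat \<times> ((nat \<times> nat) \<Rightarrow> real)) measure" where
  "H1_measure T n \<mu> \<sigma> = measure_pmf (pmf_of_set {1..n}) \<Otimes>\<^sub>M data_measure T n \<mu> \<sigma>"

definition H1_data :: "nat \<Rightarrow> real \<Rightarrow> nat \<times> ((nat \<times> nat) \<Rightarrow> real) \<Rightarrow> ((nat \<times> nat) \<Rightarrow> real)" where
  "H1_data \<tau> zs \<omega> = (snd \<omega>)((\<tau>, fst \<omega>) := zs)"

definition mu_hat :: "nat \<Rightarrow> nat \<Rightarrow> ((nat \<times> nat) \<Rightarrow> real) \<Rightarrow> real" where
  "mu_hat T n X = (\<Sum>t=1..T. \<Sum>k=1..n. X (t, k)) / real (n * T)"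

definition L_FO :: "nat \<Rightarrow> nat \<Rightarrow> real \<Rightarrow> real \<Rightarrow> real \<Rightarrow> real \<Rightarrow> real" where
  "L_FO T n \<mu> \<sigma> zs W =
     (let N = real (n * T) in
       - (1/2) * ln ((N - 1) / N)
       - N / (2 * (N - 1) * \<sigma>\<^sup>2) * W\<^sup>2
       + N * (zs - \<mu>) / ((N - 1) * \<sigma>\<^sup>2) * W
       - (zs - \<mu>)\<^sup>2 / (2 * (N - 1) * \<sigma>\<^sup>2))"

definition beta_FO :: "nat \<Rightarrow> nat \<Rightarrow> real \<Rightarrow> real \<Rightarrow> real \<Rightarrow> nat \<Rightarrow> real \<Rightarrow> real" where
  "beta_FO T n \<mu> \<sigma> zs \<tau> \<gamma> =
     measure (H1_measure T n \<mu> \<sigma>)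
       {\<omega> \<in> space (H1_measure T n \<mu> \<sigma>).
          L_FO T n \<mu> \<sigma> zs (mu_hat T n (H1_data \<tau> zs \<omega>) - \<mu>) < \<gamma>}"

definition gamma_max :: "nat \<Rightarrow> nat \<Rightarrow> real \<Rightarrow> real \<Rightarrow> real \<Rightarrow> real" where
  "gamma_max T n \<mu> \<sigma> zs =
     (1/2) * ((zs - \<mu>)\<^sup>2 / \<sigma>\<^sup>2 - ln ((real (n * T) - 1) / real (n * T)))"

definition m_star :: "real \<Rightarrow> real \<Rightarrow> real \<Rightarrow> real" where
  "m_star \<mu> \<sigma> zs = (zs - \<mu>)\<^sup>2 / \<sigma>\<^sup>2"

definition a_T :: "nat \<Rightarrow> nat \<Rightarrow> real \<Rightarrow> real \<Rightarrow> real \<Rightarrow> real" where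
  "a_T T n \<mu> \<sigma> zs = sqrt (m_star \<mu> \<sigma> zs * real (n * T))"

definition b_T :: "nat \<Rightarrow> nat \<Rightarrow> real \<Rightarrow> real \<Rightarrow> real \<Rightarrow> real \<Rightarrow> real" where
  "b_T T n \<mu> \<sigma> zs \<gamma> =
     sqrt ((real (n * T) - 1) * (m_star \<mu> \<sigma> zs - ln (1 - 1 / real (n * T)) - 2 * \<gamma>))"

end

theory Submission
  imports Defs
begin

(* Given J = j, the observed total is zs plus the sum S of the N - 1 = nT - 1 untouched
   samples, so S ~ N((N-1) mu, (N-1) sigma^2) by independence.  Completing the square gives
   L_FO = gamma_max - (S - (N-1) zs)^2 / (2 N (N-1) sigma^2), so for gamma <= gamma_max the
   event L_FO < gamma is a two-sided tail of S, whose probability is a sum of two terms of the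
   form Phi(...).  It does not depend on j, so averaging over the uniform J changes nothing. *)

lemma indep_vars_PiM_coordinates:
  assumes "finite I" "I \<noteq> {}"
    and prob: "\<And>i. i \<in> I \<Longrightarrow> prob_space (M i)"
    and sets_eq: "\<And>i. i \<in> I \<Longrightarrow> sets (M i) = sets (N i)"
  shows "prob_space.indep_vars (PiM I M) N (\<lambda>i \<omega>. \<omega> i) I"
proof -
  interpret prob_space "PiM I M"
    using prob by (rule prob_space_PiM)
  have coord_measurable: "(\<lambda>\<omega>. \<omega> i) \<in> measurable (PiM I M) (N i)" if "i \<in> I" for i
    using measurable_component_singleton[OF that, of M] sets_eq[OF that]
    by (simp cong: measurable_cong_sets)
  have coord_distr: "distr (PiM I M) (N i) (\<lambda>\<omega>. \<omega> i) = M i" if "i \<in> I" for i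
  proof -
    have "distr (PiM I M) (N i) (\<lambda>\<omega>. \<omega> i) = distr (PiM I M) (M i) (\<lambda>\<omega>. \<omega> i)"
      using sets_eq[OF that] by (intro distr_cong) auto
    also have "\<dots> = M i"
      using prob that by (rule distr_PiM_component)
    finally show ?thesis .
  qed
  have "distr (PiM I M) (PiM I N) (\<lambda>\<omega>. \<lambda>i\<in>I. \<omega> i) = distr (PiM I M) (PiM I M) (\<lambda>\<omega>. \<omega>)"
    using sets_eq by (intro distr_cong) (auto simp: space_PiM intro!: sets_PiM_cong)
  also have "\<dots> = PiM I (\<lambda>i. distr (PiM I M) (N i) (\<lambda>\<omega>. \<omega> i))"
    using coord_distr by (simp cong: PiM_cong)
  finally show ?thesis
    using assms(2) coord_measurable by (subst indep_vars_iff_distr_eq_PiM') auto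
qed

lemma distributed_sum_PiM_normal:
  fixes I J :: "'i set" and \<mu> \<sigma> :: real
  assumes "finite I" "J \<subseteq> I" "J \<noteq> {}" "\<sigma> > 0"
  shows "distributed (PiM I (\<lambda>_. density lborel (normal_density \<mu> \<sigma>))) lborel (\<lambda>\<omega>. \<Sum>i\<in>J. \<omega> i)
           (normal_density (card J * \<mu>) (sqrt (card J) * \<sigma>))"
proof -
  let ?N = "density lborel (normal_density \<mu> \<sigma>)"
  have prob_N: "prob_space ?N"
    using \<open>\<sigma> > 0\<close> by (rule prob_space_normal_density)
  interpret prob_space "PiM I (\<lambda>_. ?N)"
    using prob_N by (rule prob_space_PiM)
  have "I \<noteq> {}" "finite J"
    using assms finite_subset by auto
  then have "indep_vars (\<lambda>_. borel) (\<lambda>i \<omega>. \<omega> i) J"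
    using prob_N by (intro indep_vars_subset[OF indep_vars_PiM_coordinates \<open>J \<subseteq> I\<close>]) (auto simp: assms)
  moreover have "distributed (PiM I (\<lambda>_. ?N)) lborel (\<lambda>\<omega>. \<omega> i) (normal_density \<mu> \<sigma>)" if "i \<in> I" for i
    using distr_PiM_component[of I "\<lambda>_. ?N" i] prob_N that
    by (auto simp: distributed_def normal_density_nonneg cong: distr_cong)
  ultimately have "distributed (PiM I (\<lambda>_. ?N)) lborel (\<lambda>\<omega>. \<Sum>i\<in>J. \<omega> i)
      (normal_density (\<Sum>i\<in>J. \<mu>) (sqrt (\<Sum>i\<in>J. \<sigma>\<^sup>2)))"
    using assms \<open>finite J\<close> by (intro sum_indep_normal) auto
  moreover have "sqrt (\<Sum>i\<in>J. \<sigma>\<^sup>2) = sqrt (card J) * \<sigma>"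
    using assms by (simp add: real_sqrt_mult)
  ultimately show ?thesis
    by (simp add: mult.commute)
qed

lemma (in prob_space) prob_std_normal_less:
  assumes "distributed M lborel Z std_normal_density"
  shows "prob {\<omega> \<in> space M. Z \<omega> < x} = Phi x"
proof -
  let ?D = "density lborel std_normal_density"
  have "random_variable borel Z"
    using distributed_measurable[OF assms] by simp
  then have "prob {\<omega> \<in> space M. Z \<omega> < x} = measure (distr M lborel Z) {..<x}"
    by (subst measure_distr) (auto intro!: arg_cong[where f = prob])
  also have "\<dots> = measure ?D {..<x}"
    using distributed_distr_eq_density[OF assms] by simp
  also have "\<dots> = measure ?D {..x}"
    unfolding measure_def
    by (intro arg_cong[where f = enn2real] emeasure_eq_AE)
       (auto simp: AE_density intro: eventually_mono[OF AE_lborel_singleton[of x]])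
  finally show ?thesis
    by (simp add: Phi_def cdf_def2)
qed

lemma (in prob_space) prob_normal_less:
  assumes X: "distributed M lborel X (normal_density m s)" and "s > 0"
  shows "prob {\<omega> \<in> space M. X \<omega> < a} = Phi ((a - m) / s)"
proof -
  have "distributed M lborel (\<lambda>\<omega>. - m / s + 1 / s * X \<omega>) (normal_density (- m / s + 1 / s * m) (\<bar>1 / s\<bar> * s))"
    using \<open>s > 0\<close> by (intro normal_density_affine[OF X]) auto
  then have "distributed M lborel (\<lambda>\<omega>. (X \<omega> - m) / s) std_normal_density"
    using \<open>s > 0\<close> by (simp add: diff_divide_distrib add.commute)
  moreover have "{\<omega> \<in> space M. X \<omega> < a} = {\<omega> \<in> space M. (X \<omega> - m) / s < (a - m) / s}"
    using \<open>s > 0\<close> by (auto simp: divide_less_cancel)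
  ultimately show ?thesis
    using prob_std_normal_less by simp
qed

lemma (in prob_space) prob_normal_greater:
  assumes X: "distributed M lborel X (normal_density m s)" and "s > 0"
  shows "prob {\<omega> \<in> space M. a < X \<omega>} = Phi ((m - a) / s)"
proof -
  have "distributed M lborel (\<lambda>\<omega>. 0 + (- 1) * X \<omega>) (normal_density (0 + (- 1) * m) (\<bar>- 1\<bar> * s))"
    using \<open>s > 0\<close> by (intro normal_density_affine[OF X]) auto
  then have "prob {\<omega> \<in> space M. - X \<omega> < - a} = Phi ((m - a) / s)"
    using \<open>s > 0\<close> by (subst prob_normal_less) auto
  then show ?thesis
    by simp
qed

lemma measure_pair_pmf_constant_slices:
  assumes "prob_space M" "A \<in> sets (measure_pmf p \<Otimes>\<^sub>M M)"
    and slices: "\<And>j. j \<in> set_pmf p \<Longrightarrow> measure M (Pair j -` A) = c"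
  shows "measure (measure_pmf p \<Otimes>\<^sub>M M) A = c"
proof -
  interpret prob_space M
    by fact
  obtain j where "j \<in> set_pmf p"
    using set_pmf_not_empty[of p] by blast
  then have "c \<ge> 0"
    using slices measure_nonneg by metis
  have "emeasure (measure_pmf p \<Otimes>\<^sub>M M) A = (\<integral>\<^sup>+ j. emeasure M (Pair j -` A) \<partial>measure_pmf p)"
    using assms(2) by (rule emeasure_pair_measure_alt)
  also have "\<dots> = (\<integral>\<^sup>+ j. ennreal c \<partial>measure_pmf p)"
    using slices by (intro nn_integral_cong_AE) (simp add: AE_measure_pmf_iff emeasure_eq_measure)
  also have "\<dots> = ennreal c"
    by (simp add: measure_pmf.emeasure_space_1)
  finally show ?thesis
    using \<open>c \<ge> 0\<close> by (simp add: measure_def)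
qed

lemma prob_space_data_measure:
  "\<sigma> > 0 \<Longrightarrow> prob_space (data_measure T n \<mu> \<sigma>)"
  unfolding data_measure_def by (intro prob_space_PiM prob_space_normal_density)

lemma L_FO_shifted_sum:
  assumes "n * T \<ge> 2" "\<sigma> > 0"
  defines "N \<equiv> real (n * T)"
  shows "L_FO T n \<mu> \<sigma> zs ((s + zs) / N - \<mu>)
           = gamma_max T n \<mu> \<sigma> zs - (s - (N - 1) * zs)\<^sup>2 / (2 * N * (N - 1) * \<sigma>\<^sup>2)"
proof -
  have "N > 1"
    using assms(1) unfolding N_def by linarith
  have mean: "(s + zs) / N - \<mu> = (s - (N - 1) * zs) / N + (zs - \<mu>)"
    using \<open>N > 1\<close> by (simp add: field_simps)
  have square: "- N / (2 * (N - 1) * \<sigma>\<^sup>2) * (u / N + d)\<^sup>2 + N * d / ((N - 1) * \<sigma>\<^sup>2) * (u / N + d)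
      - d\<^sup>2 / (2 * (N - 1) * \<sigma>\<^sup>2) = d\<^sup>2 / (2 * \<sigma>\<^sup>2) - u\<^sup>2 / (2 * N * (N - 1) * \<sigma>\<^sup>2)" for u d
  proof -
    have "N \<noteq> 0" "N - 1 \<noteq> 0" "\<sigma> \<noteq> 0"
      using \<open>N > 1\<close> \<open>\<sigma> > 0\<close> by auto
    then show ?thesis
      by (simp add: divide_simps power2_eq_square) (simp add: algebra_simps)
  qed
  show ?thesis
    unfolding L_FO_def gamma_max_def Let_def N_def[symmetric] mean
    using square[of "s - (N - 1) * zs" "zs - \<mu>"] by (simp add: diff_divide_distrib mult.commute)
qed

lemma L_FO_shifted_sum_less_iff:
  assumes "n * T \<ge> 2" "\<sigma> > 0" "\<gamma> \<le> gamma_max T n \<mu> \<sigma> zs"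
  defines "N \<equiv> real (n * T)"
  defines "r \<equiv> \<sigma> * sqrt (2 * (gamma_max T n \<mu> \<sigma> zs - \<gamma>) * (N - 1) * N)"
  shows "L_FO T n \<mu> \<sigma> zs ((s + zs) / N - \<mu>) < \<gamma> \<longleftrightarrow> s < (N - 1) * zs - r \<or> (N - 1) * zs + r < s"
proof -
  define D where "D = 2 * N * (N - 1) * \<sigma>\<^sup>2"
  have "N > 1"
    using assms(1) unfolding N_def by linarith
  then have "D > 0"
    using \<open>\<sigma> > 0\<close> unfolding D_def by simp
  have "r \<ge> 0"
    using assms(2,3) \<open>N > 1\<close> unfolding r_def by simp
  have r_square: "r\<^sup>2 = (gamma_max T n \<mu> \<sigma> zs - \<gamma>) * D"
    using assms(3) \<open>N > 1\<close> unfolding r_def D_def by (simp add: power_mult_distrib)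
  have "L_FO T n \<mu> \<sigma> zs ((s + zs) / N - \<mu>) < \<gamma>
      \<longleftrightarrow> gamma_max T n \<mu> \<sigma> zs - (s - (N - 1) * zs)\<^sup>2 / D < \<gamma>"
    using L_FO_shifted_sum[OF assms(1,2)] unfolding N_def D_def by simp
  also have "\<dots> \<longleftrightarrow> r\<^sup>2 < (s - (N - 1) * zs)\<^sup>2"
    using pos_less_divide_eq[OF \<open>D > 0\<close>, of "gamma_max T n \<mu> \<sigma> zs - \<gamma>" "(s - (N - 1) * zs)\<^sup>2"]
    unfolding r_square by linarith
  also have "\<dots> \<longleftrightarrow> r < \<bar>s - (N - 1) * zs\<bar>"
    using \<open>r \<ge> 0\<close> by (metis abs_of_nonneg abs_le_square_iff not_le)
  finally show ?thesis
    by auto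
qed

lemma mu_hat_fun_upd:
  assumes "p \<in> idx T n"
  shows "mu_hat T n (X(p := z)) = ((\<Sum>i\<in>idx T n - {p}. X i) + z) / real (n * T)"
proof -
  have "(\<Sum>t=1..T. \<Sum>k=1..n. (X(p := z)) (t, k)) = (\<Sum>i\<in>idx T n. (X(p := z)) i)"
    unfolding idx_def by (simp add: sum.cartesian_product)
  also have "\<dots> = z + (\<Sum>i\<in>idx T n - {p}. X i)"
    using assms by (simp add: sum.remove[of _ p] idx_def)
  finally show ?thesis
    unfolding mu_hat_def by simp
qed

lemma measure_L_FO_less_replaced_entry:
  assumes "n * T \<ge> 2" "\<sigma> > 0" "p \<in> idx T n" "\<gamma> \<le> gamma_max T n \<mu> \<sigma> zs"
  defines "N \<equiv> real (n * T)"
  defines "d \<equiv> sqrt (N - 1) * (zs - \<mu>) / \<sigma>"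
    and "b \<equiv> sqrt (2 * (gamma_max T n \<mu> \<sigma> zs - \<gamma>) * N)"
  shows "measure (data_measure T n \<mu> \<sigma>)
           {X \<in> space (data_measure T n \<mu> \<sigma>). L_FO T n \<mu> \<sigma> zs (mu_hat T n (X(p := zs)) - \<mu>) < \<gamma>}
         = Phi (d - b) + Phi (- d - b)"
proof -
  let ?M = "data_measure T n \<mu> \<sigma>"
  define S where "S X = (\<Sum>i\<in>idx T n - {p}. X i)" for X :: "nat \<times> nat \<Rightarrow> real"
  define r where "r = \<sigma> * sqrt (2 * (gamma_max T n \<mu> \<sigma> zs - \<gamma>) * (N - 1) * N)"
  have "N > 1"
    using assms(1) unfolding N_def by linarith
  then have "r \<ge> 0"
    using assms(2,4) unfolding r_def by simp
  interpret prob_space ?M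
    using \<open>\<sigma> > 0\<close> by (rule prob_space_data_measure)
  have "card (idx T n - {p}) = n * T - 1"
    using assms(3) by (simp add: idx_def card_cartesian_product mult.commute)
  then have "real (card (idx T n - {p})) = N - 1"
    using assms(1) unfolding N_def by (simp add: of_nat_diff del: of_nat_mult)
  moreover have "idx T n - {p} \<noteq> {}"
    using \<open>card (idx T n - {p}) = n * T - 1\<close> assms(1) by (intro notI) simp
  ultimately have S_normal: "distributed ?M lborel S (normal_density ((N - 1) * \<mu>) (sqrt (N - 1) * \<sigma>))"
    using distributed_sum_PiM_normal[of "idx T n" "idx T n - {p}" \<sigma> \<mu>] \<open>\<sigma> > 0\<close>
    unfolding data_measure_def S_def by (simp add: idx_def)
  have "L_FO T n \<mu> \<sigma> zs (mu_hat T n (X(p := zs)) - \<mu>) < \<gamma>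
      \<longleftrightarrow> S X < (N - 1) * zs - r \<or> (N - 1) * zs + r < S X" for X
    using L_FO_shifted_sum_less_iff[OF assms(1,2,4), of "S X"]
    unfolding mu_hat_fun_upd[OF assms(3)] S_def r_def N_def .
  then have event_eq: "{X \<in> space ?M. L_FO T n \<mu> \<sigma> zs (mu_hat T n (X(p := zs)) - \<mu>) < \<gamma>}
      = {X \<in> space ?M. S X < (N - 1) * zs - r} \<union> {X \<in> space ?M. (N - 1) * zs + r < S X}"
    by blast
  have "prob ({X \<in> space ?M. S X < (N - 1) * zs - r} \<union> {X \<in> space ?M. (N - 1) * zs + r < S X})
      = prob {X \<in> space ?M. S X < (N - 1) * zs - r} + prob {X \<in> space ?M. (N - 1) * zs + r < S X}"
    using \<open>r \<ge> 0\<close> distributed_measurable[OF S_normal] by (intro finite_measure_Union) auto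
  also have "\<dots> = Phi (d - b) + Phi (- d - b)"
  proof -
    have "r = sqrt (N - 1) * \<sigma> * b"
      unfolding r_def b_def by (simp add: real_sqrt_mult[symmetric] ac_simps)
    then have "((N - 1) * zs - r - (N - 1) * \<mu>) / (sqrt (N - 1) * \<sigma>) = d - b"
         "((N - 1) * \<mu> - ((N - 1) * zs + r)) / (sqrt (N - 1) * \<sigma>) = - d - b"
      using \<open>N > 1\<close> \<open>\<sigma> > 0\<close> unfolding d_def by (simp_all add: field_simps)
    moreover have "sqrt (N - 1) * \<sigma> > 0"
      using \<open>N > 1\<close> \<open>\<sigma> > 0\<close> by simp
    ultimately show ?thesis
      using prob_normal_less[OF S_normal] prob_normal_greater[OF S_normal] by (simp only:)
  qed
  finally show ?thesis
    unfolding event_eq .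
qed

lemma measurable_mu_hat_H1_data [measurable]:
  "(\<lambda>\<omega>. mu_hat T n (H1_data \<tau> zs \<omega>)) \<in> borel_measurable (H1_measure T n \<mu> \<sigma>)"
proof -
  let ?H = "H1_measure T n \<mu> \<sigma>"
  have [measurable]: "fst \<in> measurable ?H (count_space UNIV)"
    unfolding H1_measure_def by (simp cong: measurable_cong_sets)
  have "(\<lambda>\<omega>. H1_data \<tau> zs \<omega> (t, k)) \<in> borel_measurable ?H" if "t \<in> {1..T}" "k \<in> {1..n}" for t k
  proof -
    have [measurable]: "(\<lambda>\<omega>. snd \<omega> (t, k)) \<in> borel_measurable ?H"
      unfolding H1_measure_def data_measure_def using that by (simp add: idx_def)
    have H1_data_entry: "(\<lambda>\<omega>. H1_data \<tau> zs \<omega> (t, k)) = (\<lambda>\<omega>. if t = \<tau> \<and> fst \<omega> = k then zs else snd \<omega> (t, k))"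
      by (auto simp: H1_data_def)
    show ?thesis
      unfolding H1_data_entry by measurable
  qed
  then show ?thesis
    unfolding mu_hat_def by measurable
qed

lemma a_T_rescaled:
  assumes "n * T \<ge> 2" "\<sigma> > 0"
  defines "N \<equiv> real (n * T)"
  shows "a_T T n \<mu> \<sigma> zs * sqrt ((N - 1) / N) = \<bar>sqrt (N - 1) * (zs - \<mu>) / \<sigma>\<bar>"
proof -
  have "N > 1"
    using assms(1) unfolding N_def by linarith
  have "(sqrt (N - 1) * (zs - \<mu>) / \<sigma>)\<^sup>2 = (N - 1) * (zs - \<mu>)\<^sup>2 / \<sigma>\<^sup>2"
    using \<open>N > 1\<close> by (simp add: power_divide power_mult_distrib)
  also have "\<dots> = (zs - \<mu>)\<^sup>2 / \<sigma>\<^sup>2 * N * ((N - 1) / N)"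
    using \<open>N > 1\<close> by simp
  finally have "(zs - \<mu>)\<^sup>2 / \<sigma>\<^sup>2 * N * ((N - 1) / N) = (sqrt (N - 1) * (zs - \<mu>) / \<sigma>)\<^sup>2" ..
  then show ?thesis
    unfolding a_T_def m_star_def N_def[symmetric] by (simp add: real_sqrt_mult[symmetric])
qed

lemma b_T_rescaled:
  assumes "n * T \<ge> 2"
  defines "N \<equiv> real (n * T)"
  shows "b_T T n \<mu> \<sigma> zs \<gamma> * sqrt (N / (N - 1)) = sqrt (2 * (gamma_max T n \<mu> \<sigma> zs - \<gamma>) * N)"
proof -
  have "N > 1"
    using assms(1) unfolding N_def by linarith
  then have "1 - 1 / N = (N - 1) / N"
    by (simp add: field_simps)
  then have "m_star \<mu> \<sigma> zs - ln (1 - 1 / N) - 2 * \<gamma> = 2 * (gamma_max T n \<mu> \<sigma> zs - \<gamma>)"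
    unfolding gamma_max_def m_star_def N_def by simp
  moreover have "(N - 1) * c * (N / (N - 1)) = c * N" for c
    using \<open>N > 1\<close> by simp
  ultimately show ?thesis
    unfolding b_T_def N_def[symmetric] by (simp add: real_sqrt_mult[symmetric])
qed

lemma Phi_two_tails_abs:
  "Phi (\<bar>d\<bar> - b) + Phi (- \<bar>d\<bar> - b) = Phi (d - b) + Phi (- d - b)"
  by (cases "d \<ge> 0") simp_all

theorem lemma3p8:
  fixes T n \<tau> :: nat and \<mu> \<sigma> zs \<gamma> :: real
  assumes "T \<ge> 1" and "n \<ge> 1" and "n * T \<ge> 2"
    and "\<sigma> > 0" and "\<tau> \<in> {1..T}"
    and "\<gamma> \<le> gamma_max T n \<mu> \<sigma> zs"
  shows "beta_FO T n \<mu> \<sigma> zs \<tau> \<gamma> =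
     Phi (a_T T n \<mu> \<sigma> zs * sqrt ((real (n * T) - 1) / real (n * T))
          - b_T T n \<mu> \<sigma> zs \<gamma> * sqrt (real (n * T) / (real (n * T) - 1)))
   + Phi (- a_T T n \<mu> \<sigma> zs * sqrt ((real (n * T) - 1) / real (n * T))
          - b_T T n \<mu> \<sigma> zs \<gamma> * sqrt (real (n * T) / (real (n * T) - 1)))"
proof -
  define N where "N = real (n * T)"
  define d where "d = sqrt (N - 1) * (zs - \<mu>) / \<sigma>"
  define b where "b = sqrt (2 * (gamma_max T n \<mu> \<sigma> zs - \<gamma>) * N)"
  let ?H = "H1_measure T n \<mu> \<sigma>"
  let ?A = "{\<omega> \<in> space ?H. L_FO T n \<mu> \<sigma> zs (mu_hat T n (H1_data \<tau> zs \<omega>) - \<mu>) < \<gamma>}"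
  have "?A \<in> sets ?H"
    unfolding L_FO_def Let_def by measurable
  moreover have "measure (data_measure T n \<mu> \<sigma>) (Pair j -` ?A) = Phi (d - b) + Phi (- d - b)"
    if "j \<in> {1..n}" for j
  proof -
    have "(\<tau>, j) \<in> idx T n"
      using that assms(5) by (simp add: idx_def)
    then show ?thesis
      using measure_L_FO_less_replaced_entry[OF assms(3,4) _ assms(6)] unfolding d_def b_def N_def
      by (simp add: H1_measure_def H1_data_def space_pair_measure vimage_def)
  qed
  ultimately have "beta_FO T n \<mu> \<sigma> zs \<tau> \<gamma> = Phi (d - b) + Phi (- d - b)"
    unfolding beta_FO_def H1_measure_def using prob_space_data_measure[OF assms(4)] assms(2)
    by (intro measure_pair_pmf_constant_slices) auto
  then show ?thesis
    unfolding a_T_rescaled[OF assms(3,4)] b_T_rescaled[OF assms(3)] mult_minus_left Phi_two_tails_abs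
    unfolding d_def b_def N_def .
qed

end
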